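(* For each integer $n>1$, there exists a connected $(3n-2)$-regular integral graph with $6n$ vertices.
   Context: A graph is integral if all eigenvalues of its adjacency matrix are integers. *)

theory Defs
  imports "Jordan_Normal_Form.Char_Poly"
begin

definition simple_graph :: "nat \<Rightarrow> (nat \<Rightarrow> nat \<Rightarrow> bool) \<Rightarrow> bool" where
  "simple_graph n E \<longleftrightarrow>
     (\<forall>i j. E i j \<longrightarrow> i < n \<and> j < n) \<and>
     (\<forall>i j. E i j \<longrightarrow> E j i) \<and>
     (\<forall>i. \<not> E i i)"

definition adj_matrix :: "nat \<Rightarrow> (nat \<Rightarrow> nat \<Rightarrow> bool) \<Rightarrow> complex mat" where
  "adj_matrix n E = mat n n (\<lambda>(i, j). if E i j then 1 else 0)"

definition regular_graph :: "nat \<Rightarrow> (nat \<Rightarrow> nat \<Rightarrow> bool) \<Rightarrow> nat \<Rightarrow> bool" where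
  "regular_graph n E k \<longleftrightarrow> (\<forall>i<n. card {j. j < n \<and> E i j} = k)"

definition connected_graph :: "nat \<Rightarrow> (nat \<Rightarrow> nat \<Rightarrow> bool) \<Rightarrow> bool" where
  "connected_graph n E \<longleftrightarrow> n > 0 \<and> (\<forall>i<n. \<forall>j<n. E\<^sup>*\<^sup>* i j)"

definition integral_graph :: "nat \<Rightarrow> (nat \<Rightarrow> nat \<Rightarrow> bool) \<Rightarrow> bool" where
  "integral_graph n E \<longleftrightarrow> (\<forall>ev. eigenvalue (adj_matrix n E) ev \<longrightarrow> ev \<in> \<int>)"

end

theory Submission
  imports Defs
begin

(* The graph is the prism over the complete n-partite graph K_{n x 3} with parts of size 3,
   i.e. its Cartesian product with K_2: it has 6n vertices and degree 3(n - 1) + 1.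
   Splitting an eigenvector of a prism into its two layers x and y, the vectors x + y and
   x - y are eigenvectors of the base graph for the eigenvalues mu - 1 and mu + 1, at least
   one of them nonzero; hence prisms of integral graphs are integral.  The spectrum of
   K_{n x m} lies in {(n - 1) m, 0, -m}: summing the eigenvalue equation over a part and
   then over all vertices shows that unless mu is one of the first two values, all part
   sums vanish, and then the eigenvalue equation reads mu * f v = 0. *)

lemma index_adj_matrix_mult_vec:
  assumes "v \<in> carrier_vec N" "i < N"
  shows "(adj_matrix N E *\<^sub>v v) $ i = (\<Sum>j<N. if E i j then v $ j else 0)"
  using assms by (auto simp: adj_matrix_def scalar_prod_def atLeast0LessThan intro!: sum.cong)

lemma eigenvalue_adj_matrix_iff:
  "eigenvalue (adj_matrix N E) \<mu> \<longleftrightarrow>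
     (\<exists>f. (\<exists>i<N. f i \<noteq> 0) \<and> (\<forall>i<N. (\<Sum>j<N. if E i j then f j else 0) = \<mu> * f i))"
proof
  assume "eigenvalue (adj_matrix N E) \<mu>"
  then obtain v where v: "v \<in> carrier_vec N" "v \<noteq> 0\<^sub>v N" "adj_matrix N E *\<^sub>v v = \<mu> \<cdot>\<^sub>v v"
    by (auto simp: eigenvalue_def eigenvector_def adj_matrix_def)
  have "\<exists>i<N. v $ i \<noteq> 0"
  proof (rule ccontr)
    assume "\<not> (\<exists>i<N. v $ i \<noteq> 0)"
    then have "v = 0\<^sub>v N"
      using v(1) by (intro eq_vecI) auto
    with v(2) show False ..
  qed
  moreover have "(\<Sum>j<N. if E i j then v $ j else 0) = \<mu> * v $ i" if "i < N" for i
  proof -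
    have "(adj_matrix N E *\<^sub>v v) $ i = (\<mu> \<cdot>\<^sub>v v) $ i"
      by (simp only: v(3))
    then show ?thesis
      using v(1) that by (simp add: index_adj_matrix_mult_vec)
  qed
  ultimately show "\<exists>f. (\<exists>i<N. f i \<noteq> 0) \<and> (\<forall>i<N. (\<Sum>j<N. if E i j then f j else 0) = \<mu> * f i)"
    by blast
next
  assume "\<exists>f. (\<exists>i<N. f i \<noteq> 0) \<and> (\<forall>i<N. (\<Sum>j<N. if E i j then f j else 0) = \<mu> * f i)"
  then obtain f i where f: "i < N" "f i \<noteq> 0"
    and eq: "\<And>i. i < N \<Longrightarrow> (\<Sum>j<N. if E i j then f j else 0) = \<mu> * f i"
    by blast
  have "vec N f \<noteq> 0\<^sub>v N"
    using f by (metis index_vec index_zero_vec(1))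
  moreover have "adj_matrix N E *\<^sub>v vec N f = \<mu> \<cdot>\<^sub>v vec N f"
  proof (rule eq_vecI)
    fix i assume "i < dim_vec (\<mu> \<cdot>\<^sub>v vec N f)"
    then have "i < N" by simp
    then have "(adj_matrix N E *\<^sub>v vec N f) $ i = (\<Sum>j<N. if E i j then f j else 0)"
      by (simp only: index_adj_matrix_mult_vec[OF vec_carrier]) (intro sum.cong; simp)
    with \<open>i < N\<close> show "(adj_matrix N E *\<^sub>v vec N f) $ i = (\<mu> \<cdot>\<^sub>v vec N f) $ i"
      by (simp add: eq)
  qed (simp add: adj_matrix_def)
  moreover have "dim_row (adj_matrix N E) = N"
    by (simp add: adj_matrix_def)
  ultimately have "eigenvector (adj_matrix N E) (vec N f) \<mu>"
    unfolding eigenvector_def by simp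
  then show "eigenvalue (adj_matrix N E) \<mu>"
    unfolding eigenvalue_def ..
qed

lemma card_neighbours_eq_sum: "card {j. j < (N::nat) \<and> E i j} = (\<Sum>j<N. if E i j then 1 else 0)"
  using sum.inter_filter[of "{..<N}" "\<lambda>_. 1::nat" "E i"] by simp

lemma sum_lessThan_double: "(\<Sum>j<2 * (N::nat). g j) = (\<Sum>w<N. g (2 * w) + g (2 * w + 1))"
  using sum.nat_group[of g 2 N] by (simp add: mult.commute numeral_2_eq_2)

section \<open>Prisms\<close>

(* Vertex (w, s) of the product of E with K_2 is encoded as 2 * w + s. *)
definition prism :: "nat \<Rightarrow> (nat \<Rightarrow> nat \<Rightarrow> bool) \<Rightarrow> nat \<Rightarrow> nat \<Rightarrow> bool" where
  "prism N E u v \<longleftrightarrow> u < 2 * N \<and> v < 2 * N \<and>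
     (if u mod 2 = v mod 2 then E (u div 2) (v div 2) else u div 2 = v div 2)"

lemma prism_iff:
  assumes "w < N" "w' < N" "t < 2" "t' < 2"
  shows "prism N E (2 * w + t) (2 * w' + t') \<longleftrightarrow> (if t = t' then E w w' else w = w')"
proof -
  have "(2 * w + t) div 2 = w" "(2 * w + t) mod 2 = t" "(2 * w' + t') div 2 = w'" "(2 * w' + t') mod 2 = t'"
    using assms(3,4) by simp_all
  moreover have "2 * w + t < 2 * N" "2 * w' + t' < 2 * N"
    using assms by linarith+
  ultimately show ?thesis
    by (simp add: prism_def)
qed

lemma simple_graph_prism:
  assumes "simple_graph N E"
  shows "simple_graph (2 * N) (prism N E)"
  using assms unfolding simple_graph_def prism_def by auto

lemma prism_adj_sum:
  assumes "w < N" "t < 2"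
  shows "(\<Sum>j<2 * N. if prism N E (2 * w + t) j then f j else 0) =
           (\<Sum>w'<N. if E w w' then f (2 * w' + t) else 0) + f (2 * w + (1 - t))"
proof -
  have "(\<Sum>j<2 * N. if prism N E (2 * w + t) j then f j else 0) =
          (\<Sum>w'<N. (if E w w' then f (2 * w' + t) else 0) + (if w' = w then f (2 * w + (1 - t)) else 0))"
    unfolding sum_lessThan_double
  proof (rule sum.cong[OF refl])
    fix w' assume "w' \<in> {..<N}"
    then have "w' < N" by simp
    have "prism N E (2 * w + t) (2 * w') \<longleftrightarrow> (if t = 0 then E w w' else w = w')"
      using prism_iff[OF assms(1) \<open>w' < N\<close> assms(2), of 0] by simp
    moreover have "prism N E (2 * w + t) (2 * w' + 1) \<longleftrightarrow> (if t = 1 then E w w' else w = w')"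
      using prism_iff[OF assms(1) \<open>w' < N\<close> assms(2), of 1] by simp
    moreover have "t = 0 \<or> t = 1"
      using assms(2) by linarith
    ultimately show "(if prism N E (2 * w + t) (2 * w') then f (2 * w') else 0) +
            (if prism N E (2 * w + t) (2 * w' + 1) then f (2 * w' + 1) else 0) =
          (if E w w' then f (2 * w' + t) else 0) + (if w' = w then f (2 * w + (1 - t)) else 0)"
      by (elim disjE) (simp_all add: add.commute)
  qed
  also have "\<dots> = (\<Sum>w'<N. if E w w' then f (2 * w' + t) else 0) + f (2 * w + (1 - t))"
    using assms(1) by (simp add: sum.distrib)
  finally show ?thesis .
qed

lemma prism_vertex_cases:
  assumes "u < 2 * (N::nat)"
  obtains w t where "u = 2 * w + t" "w < N" "t < 2"
  using assms by (intro that[of "u div 2" "u mod 2"]) auto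

lemma regular_graph_prism:
  assumes "regular_graph N E k"
  shows "regular_graph (2 * N) (prism N E) (Suc k)"
  unfolding regular_graph_def
proof (intro allI impI)
  fix u assume "u < 2 * N"
  then obtain w t where u: "u = 2 * w + t" "w < N" "t < 2"
    by (rule prism_vertex_cases)
  have "card {j. j < 2 * N \<and> prism N E u j} = (\<Sum>w'<N. if E w w' then 1 else 0) + 1"
    unfolding card_neighbours_eq_sum u(1) prism_adj_sum[OF u(2,3)] ..
  also have "\<dots> = Suc k"
    using assms u(2) by (simp add: regular_graph_def flip: card_neighbours_eq_sum)
  finally show "card {j. j < 2 * N \<and> prism N E u j} = Suc k" .
qed

lemma rtranclp_prism_layer:
  assumes "simple_graph N E" "E\<^sup>*\<^sup>* a b" "t < 2"
  shows "(prism N E)\<^sup>*\<^sup>* (2 * a + t) (2 * b + t)"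
  using assms(2)
proof (induction rule: rtranclp_induct)
  case (step b c)
  with assms(1) have "b < N" "c < N"
    unfolding simple_graph_def by auto
  with step.hyps(2) assms(3) have "prism N E (2 * b + t) (2 * c + t)"
    by (simp add: prism_iff)
  with step.IH show ?case
    by (rule rtranclp.rtrancl_into_rtrancl)
qed simp

lemma connected_graph_prism:
  assumes "simple_graph N E" "connected_graph N E"
  shows "connected_graph (2 * N) (prism N E)"
  unfolding connected_graph_def
proof (intro conjI allI impI)
  show "2 * N > 0"
    using assms(2) by (simp add: connected_graph_def)
  fix u v assume "u < 2 * N" "v < 2 * N"
  then obtain a s b t where u: "u = 2 * a + s" "a < N" "s < 2" and v: "v = 2 * b + t" "b < N" "t < 2"
    by (metis prism_vertex_cases)
  have "(prism N E)\<^sup>*\<^sup>* u (2 * b + s)"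
    using rtranclp_prism_layer[OF assms(1) _ u(3)] assms(2) u v unfolding connected_graph_def by simp
  moreover have "(prism N E)\<^sup>*\<^sup>* (2 * b + s) v"
    using prism_iff[OF v(2) v(2) u(3) v(3), of E] v(1) by (cases "s = t") auto
  ultimately show "(prism N E)\<^sup>*\<^sup>* u v"
    by (rule rtranclp_trans)
qed

lemma prism_eigenvalue:
  assumes "eigenvalue (adj_matrix (2 * N) (prism N E)) \<mu>"
  shows "eigenvalue (adj_matrix N E) (\<mu> - 1) \<or> eigenvalue (adj_matrix N E) (\<mu> + 1)"
proof -
  obtain f i where "i < 2 * N" "f i \<noteq> 0"
    and eq: "\<And>u. u < 2 * N \<Longrightarrow> (\<Sum>j<2 * N. if prism N E u j then f j else 0) = \<mu> * f u"
    using assms unfolding eigenvalue_adj_matrix_iff by blast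
  define x where "x = (\<lambda>w. f (2 * w))"
  define y where "y = (\<lambda>w. f (2 * w + 1))"
  define A where "A g w = (\<Sum>w'<N. if E w w' then g w' else 0)" for g :: "nat \<Rightarrow> complex" and w
  have A_add: "A (\<lambda>w. g w + h w) w = A g w + A h w"
    and A_diff: "A (\<lambda>w. g w - h w) w = A g w - A h w" for g h w
    unfolding A_def by (simp_all flip: sum.distrib sum_subtractf) (intro sum.cong; simp)+
  have eq_x: "A x w = \<mu> * x w - y w" if "w < N" for w
    using eq[of "2 * w"] prism_adj_sum[OF that, of 0 E f] that
    by (simp add: A_def x_def y_def eq_diff_eq cong: if_cong)
  have eq_y: "A y w = \<mu> * y w - x w" if "w < N" for w
    using eq[of "2 * w + 1"] prism_adj_sum[OF that, of 1 E f] that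
    by (simp add: A_def x_def y_def eq_diff_eq cong: if_cong)
  have sum_eigen: "A (\<lambda>w. x w + y w) w = (\<mu> - 1) * (x w + y w)" if "w < N" for w
    unfolding A_add eq_x[OF that] eq_y[OF that] by (simp add: algebra_simps)
  have diff_eigen: "A (\<lambda>w. x w - y w) w = (\<mu> + 1) * (x w - y w)" if "w < N" for w
    unfolding A_diff eq_x[OF that] eq_y[OF that] by (simp add: algebra_simps)
  define w where "w = i div 2"
  have "w < N"
    using \<open>i < 2 * N\<close> by (simp add: w_def)
  have "i = 2 * w \<or> i = 2 * w + 1"
    unfolding w_def by linarith
  with \<open>f i \<noteq> 0\<close> have "x w \<noteq> 0 \<or> y w \<noteq> 0"
    by (auto simp: x_def y_def)
  then have "x w + y w \<noteq> 0 \<or> x w - y w \<noteq> 0"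
    by (auto simp: add_eq_0_iff)
  then show ?thesis
  proof
    assume "x w + y w \<noteq> 0"
    with \<open>w < N\<close> sum_eigen show ?thesis
      unfolding eigenvalue_adj_matrix_iff A_def by (intro disjI1 exI[of _ "\<lambda>w. x w + y w"]) auto
  next
    assume "x w - y w \<noteq> 0"
    with \<open>w < N\<close> diff_eigen show ?thesis
      unfolding eigenvalue_adj_matrix_iff A_def by (intro disjI2 exI[of _ "\<lambda>w. x w - y w"]) auto
  qed
qed

lemma integral_graph_prism:
  assumes "integral_graph N E"
  shows "integral_graph (2 * N) (prism N E)"
  unfolding integral_graph_def
proof (intro allI impI)
  fix \<mu> assume "eigenvalue (adj_matrix (2 * N) (prism N E)) \<mu>"
  then have "\<mu> - 1 \<in> \<int> \<or> \<mu> + 1 \<in> \<int>"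
    using prism_eigenvalue assms unfolding integral_graph_def by blast
  then show "\<mu> \<in> \<int>"
    by (metis Ints_1 Ints_add Ints_diff add_diff_cancel diff_add_cancel)
qed

section \<open>Complete multipartite graphs\<close>

(* K_{n x m}: the n parts {q * m..<q * m + m} have m vertices each. *)
definition complete_multipartite :: "nat \<Rightarrow> nat \<Rightarrow> nat \<Rightarrow> nat \<Rightarrow> bool" where
  "complete_multipartite n m v w \<longleftrightarrow> v < n * m \<and> w < n * m \<and> v div m \<noteq> w div m"

lemma simple_graph_complete_multipartite: "simple_graph (n * m) (complete_multipartite n m)"
  by (auto simp: simple_graph_def complete_multipartite_def)

lemma filter_div_eq_atLeastLessThan:
  fixes n m q :: nat
  assumes "q < n"
  shows "{w \<in> {..<n * m}. w div m = q} = {q * m..<q * m + m}"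
  unfolding set_eq_iff
proof (intro allI iffI)
  fix w assume "w \<in> {w \<in> {..<n * m}. w div m = q}"
  then have "w div m = q" "0 < m"
    by (auto intro: Nat.gr0I)
  then show "w \<in> {q * m..<q * m + m}"
    using div_times_less_eq_dividend[of w m] dividend_less_div_times[of m w] by simp
next
  fix w assume w: "w \<in> {q * m..<q * m + m}"
  have "q * m + m \<le> n * m"
    using assms by (metis Suc_leI mult_Suc mult_le_mono1 add.commute)
  with w have "w div m = q" "w < n * m"
    by (auto intro!: div_nat_eqI simp: mult.commute)
  then show "w \<in> {w \<in> {..<n * m}. w div m = q}"
    by simp
qed

lemma complete_multipartite_adj_sum:
  fixes f :: "nat \<Rightarrow> 'a::comm_monoid_add"
  assumes "v < n * m"
  shows "(\<Sum>w<n * m. if complete_multipartite n m v w then f w else 0) +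
           (\<Sum>w = v div m * m..<v div m * m + m. f w) = (\<Sum>w<n * m. f w)"
proof -
  have "v div m < n"
    using assms by (metis less_mult_imp_div_less)
  have "(\<Sum>w<n * m. f w) =
          (\<Sum>w<n * m. if complete_multipartite n m v w then f w else 0) +
          (\<Sum>w<n * m. if w div m = v div m then f w else 0)"
    unfolding sum.distrib[symmetric]
    by (rule sum.cong) (auto simp: complete_multipartite_def assms)
  also have "(\<Sum>w<n * m. if w div m = v div m then f w else 0) = (\<Sum>w = v div m * m..<v div m * m + m. f w)"
    by (simp only: sum.inter_filter[symmetric, OF finite_lessThan]
        filter_div_eq_atLeastLessThan[OF \<open>v div m < n\<close>])
  finally show ?thesis ..
qed

lemma regular_graph_complete_multipartite:
  "regular_graph (n * m) (complete_multipartite n m) ((n - 1) * m)"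
  unfolding regular_graph_def
proof (intro allI impI)
  fix v assume "v < n * m"
  from complete_multipartite_adj_sum[OF this, of "\<lambda>_. 1::nat"]
  have "card {w. w < n * m \<and> complete_multipartite n m v w} + m = n * m"
    by (simp add: card_neighbours_eq_sum)
  then show "card {w. w < n * m \<and> complete_multipartite n m v w} = (n - 1) * m"
    by (simp add: diff_mult_distrib)
qed

lemma connected_graph_complete_multipartite:
  assumes "1 < n" "0 < m"
  shows "connected_graph (n * m) (complete_multipartite n m)"
  unfolding connected_graph_def
proof (intro conjI allI impI)
  show "0 < n * m"
    using assms by simp
  fix v w assume v: "v < n * m" and w: "w < n * m"
  show "(complete_multipartite n m)\<^sup>*\<^sup>* v w"
  proof (cases "v div m = w div m")
    case False
    with v w show ?thesis
      by (simp add: complete_multipartite_def r_into_rtranclp)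
  next
    case True
    define c where "c = (Suc (v div m) mod n) * m"
    have "v div m < n"
      using v by (metis less_mult_imp_div_less)
    have "Suc (v div m) mod n \<noteq> v div m"
    proof (cases "Suc (v div m) < n")
      case False
      with \<open>v div m < n\<close> have "Suc (v div m) = n"
        by simp
      with assms(1) show ?thesis
        by auto
    qed simp
    moreover have "c < n * m"
      using assms by (simp add: c_def)
    moreover have "c div m = Suc (v div m) mod n"
      using assms(2) by (simp add: c_def)
    ultimately have "complete_multipartite n m v c" "complete_multipartite n m c w"
      using v w True by (auto simp: complete_multipartite_def)
    then show ?thesis
      by (meson converse_rtranclp_into_rtranclp r_into_rtranclp)
  qed
qed

lemma complete_multipartite_eigenvalue:
  assumes "eigenvalue (adj_matrix (n * m) (complete_multipartite n m)) \<mu>"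
  shows "\<mu> = of_nat ((n - 1) * m) \<or> \<mu> = - of_nat m \<or> \<mu> = 0"
proof -
  obtain f v where "v < n * m" "f v \<noteq> 0"
    and eq: "\<And>w. w < n * m \<Longrightarrow>
               (\<Sum>u<n * m. if complete_multipartite n m w u then f u else 0) = \<mu> * f w"
    using assms unfolding eigenvalue_adj_matrix_iff by blast
  define P where "P = (\<Sum>u<n * m. f u)"
  define B where "B q = (\<Sum>u = q * m..<q * m + m. f u)" for q
  have vertex: "\<mu> * f w = P - B (w div m)" if "w < n * m" for w
    using complete_multipartite_adj_sum[OF that, of f] eq[OF that]
    unfolding P_def B_def by (simp add: eq_diff_eq)
  have part: "\<mu> * B q = of_nat m * (P - B q)" if "q < n" for q
  proof -
    have "\<mu> * B q = (\<Sum>w = q * m..<q * m + m. \<mu> * f w)"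
      by (simp add: B_def sum_distrib_left)
    also have "\<dots> = (\<Sum>w = q * m..<q * m + m. P - B q)"
    proof (rule sum.cong[OF refl])
      fix w assume "w \<in> {q * m..<q * m + m}"
      then have "w < n * m" "w div m = q"
        using filter_div_eq_atLeastLessThan[OF that, of m] by blast+
      then show "\<mu> * f w = P - B q"
        using vertex by simp
    qed
    finally show ?thesis
      by simp
  qed
  have total: "\<mu> * P = of_nat m * (of_nat n * P - P)"
  proof -
    have "P = (\<Sum>q<n. B q)"
      unfolding P_def B_def by (rule sum.nat_group[symmetric])
    then have "\<mu> * P = (\<Sum>q<n. of_nat m * (P - B q))"
      by (simp add: sum_distrib_left part)
    also have "\<dots> = of_nat m * (of_nat n * P - P)"
      by (simp add: sum_distrib_left[symmetric] sum_subtractf \<open>P = (\<Sum>q<n. B q)\<close>[symmetric])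
    finally show ?thesis .
  qed
  show ?thesis
  proof (cases "P = 0")
    case False
    then have "n \<noteq> 0"
      unfolding P_def by (cases n) simp_all
    with total have "(\<mu> - of_nat ((n - 1) * m)) * P = 0"
      by (simp add: of_nat_diff algebra_simps)
    with False show ?thesis
      by simp
  next
    case P: True
    show ?thesis
    proof (cases "\<exists>q<n. B q \<noteq> 0")
      case True
      then obtain q where "q < n" "B q \<noteq> 0"
        by blast
      with part[OF this(1)] P have "(\<mu> + of_nat m) * B q = 0"
        by (simp add: algebra_simps)
      with \<open>B q \<noteq> 0\<close> show ?thesis
        by (simp add: add_eq_0_iff)
    next
      case False
      moreover have "v div m < n"
        using \<open>v < n * m\<close> by (metis less_mult_imp_div_less)
      ultimately show ?thesis
        using vertex[OF \<open>v < n * m\<close>] P \<open>f v \<noteq> 0\<close> by simp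
    qed
  qed
qed

lemma integral_graph_complete_multipartite:
  "integral_graph (n * m) (complete_multipartite n m)"
  unfolding integral_graph_def
  using complete_multipartite_eigenvalue by (metis Ints_0 Ints_minus Ints_of_nat)

theorem corollary4p6:
  fixes n :: nat
  assumes "n > 1"
  shows "\<exists>E. simple_graph (6 * n) E \<and> connected_graph (6 * n) E \<and>
             regular_graph (6 * n) E (3 * n - 2) \<and> integral_graph (6 * n) E"
proof -
  have "6 * n = 2 * (n * 3)" "3 * n - 2 = Suc ((n - 1) * 3)"
    using assms by simp_all
  moreover have "simple_graph (n * 3) (complete_multipartite n 3)"
    "connected_graph (n * 3) (complete_multipartite n 3)"
    using simple_graph_complete_multipartite connected_graph_complete_multipartite assms by simp_all
  ultimately show ?thesis
    using simple_graph_prism connected_graph_prism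
      regular_graph_prism[OF regular_graph_complete_multipartite]
      integral_graph_prism[OF integral_graph_complete_multipartite]
    by metis
qed

end
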